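(* Let $q'>0$, $e'=0$, $q_{\max}>0$, $\mathcal D''_1=\{e:0\le e\le1\}$, $\mathcal D_2=\{(q,\omega):0<q\le q_{\max},\ 0\le\omega\le\pi/2\}$. For each $(q,\omega)\in\mathcal D_2$, $$\min_{e\in\mathcal D''_1}\delta_{\rm nod}=\max\Big\{0,\ q'-\frac{2q}{1-\cos\omega},\ q-q'\Big\},\qquad \max_{e\in\mathcal D''_1}\delta_{\rm nod}=\max\Big\{q'-q,\ \frac{2q}{1+\cos\omega}-q'\Big\}.$$
   Context: Here the trajectory $\mathcal A'$ is a circle of radius $q'$ ($e'=0$), so $r'_+=r'_-=q'$. For $q>0$, $e\in[0,1]$, $\omega$ an angle, define $r_{\pm}=\frac{q(1+e)}{1\pm e\cos\omega}$ (extended-real value $+\infty$ when the denominator vanishes; $\frac{2q}{1-\cos\omega}=+\infty$ at $\omega=0$), $d^\pm=q'-r_\pm$, and the nodal distance $\delta_{\rm nod}(q,e,\omega)=\min\{|d^+|,|d^-|\}$. *)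

theory Defs
  imports Complex_Main "HOL-Library.Extended_Real"
begin

definition r_plus :: "real \<Rightarrow> real \<Rightarrow> real \<Rightarrow> ereal" where
  "r_plus q e \<omega> = (if 1 + e * cos \<omega> = 0 then \<infinity> else ereal (q * (1 + e) / (1 + e * cos \<omega>)))"

definition r_minus :: "real \<Rightarrow> real \<Rightarrow> real \<Rightarrow> ereal" where
  "r_minus q e \<omega> = (if 1 - e * cos \<omega> = 0 then \<infinity> else ereal (q * (1 + e) / (1 - e * cos \<omega>)))"

text \<open>Nodal distance for a circular trajectory of radius qp: d = qp - r.\<close>
definition delta_nod :: "real \<Rightarrow> real \<Rightarrow> real \<Rightarrow> real \<Rightarrow> ereal" where
  "delta_nod qp q e \<omega> = min \<bar>ereal qp - r_plus q e \<omega>\<bar> \<bar>ereal qp - r_minus q e \<omega>\<bar>"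

end

theory Submission
  imports Defs
begin

text \<open>Write \<open>c = cos \<omega> \<in> [0,1]\<close>. On \<open>e \<in> [0,1]\<close> the radii satisfy
  \<open>q \<le> r\<^sub>+ \<le> r\<^sub>-\<close>, \<open>r\<^sub>+ \<le> 2q/(1+c)\<close> and \<open>r\<^sub>- \<le> 2q/(1-c)\<close>, with equalities at
  \<open>e = 0\<close> (both radii equal \<open>q\<close>) and at \<open>e = 1\<close>. The upper
  bound is attained at \<open>e = 0\<close> or \<open>e = 1\<close>; the lower bound at \<open>e = 0\<close>, at \<open>e = 1\<close>, or
  else, when \<open>q < q' \<le> 2q/(1-c)\<close>, at the explicit eccentricity
  \<open>e = (q' - q)/(q + q' c)\<close> for which \<open>r\<^sub>- = q'\<close>, so that the nodal distance vanishes.\<close>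

definition rho_plus :: "real \<Rightarrow> real \<Rightarrow> real \<Rightarrow> real" where
  "rho_plus q e c = q * (1 + e) / (1 + e * c)"

definition rho_minus :: "real \<Rightarrow> real \<Rightarrow> real \<Rightarrow> real" where
  "rho_minus q e c = q * (1 + e) / (1 - e * c)"

definition min_delta_nod :: "real \<Rightarrow> real \<Rightarrow> real \<Rightarrow> ereal" where
  "min_delta_nod qp q \<omega> = max 0 (max (ereal qp - (if cos \<omega> = 1 then \<infinity> else ereal (2 * q / (1 - cos \<omega>))))
                                    (ereal (q - qp)))"

definition max_delta_nod :: "real \<Rightarrow> real \<Rightarrow> real \<Rightarrow> real" where
  "max_delta_nod qp q \<omega> = max (qp - q) (2 * q / (1 + cos \<omega>) - qp)"

lemma rho_plus_bounds:
  fixes q e c :: real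
  assumes "0 \<le> e" "e \<le> 1" "0 \<le> c" "c \<le> 1" "0 \<le> q"
  shows "q \<le> rho_plus q e c" "rho_plus q e c \<le> 2 * q / (1 + c)"
proof -
  have pos: "1 + e * c > 0" using assms by (simp add: add_pos_nonneg)
  have "e * c \<le> e" using assms by (simp add: mult_left_le)
  then show "q \<le> rho_plus q e c"
    using pos assms by (simp add: rho_plus_def divide_simps mult_left_mono)
  have "0 \<le> (1 - c) * (1 - e)" using assms by simp
  then have "(1 + e) * (1 + c) \<le> 2 * (1 + e * c)" by (simp add: algebra_simps)
  then have "q * ((1 + e) * (1 + c)) \<le> q * (2 * (1 + e * c))" using assms by (simp add: mult_left_mono)
  then show "rho_plus q e c \<le> 2 * q / (1 + c)"
    using pos assms by (simp add: rho_plus_def divide_simps algebra_simps)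
qed

lemma rho_plus_le_rho_minus:
  fixes q e c :: real
  assumes "0 \<le> e" "e \<le> 1" "0 \<le> c" "c \<le> 1" "e * c \<noteq> 1" "0 \<le> q"
  shows "rho_plus q e c \<le> rho_minus q e c"
proof -
  have "e * c \<le> c" using assms mult_right_mono[of e 1 c] by simp
  then have "1 - e * c > 0" using assms by simp
  then show ?thesis
    unfolding rho_plus_def rho_minus_def
    using assms by (intro divide_left_mono) (auto simp: add_pos_nonneg)
qed

lemma rho_minus_le:
  fixes q e c :: real
  assumes "0 \<le> e" "e \<le> 1" "0 \<le> c" "c < 1" "0 \<le> q"
  shows "rho_minus q e c \<le> 2 * q / (1 - c)"
proof -
  have "e * c \<le> c" using assms mult_right_mono[of e 1 c] by simp
  then have pos: "1 - e * c > 0" using assms by simp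
  have "0 \<le> (1 + c) * (1 - e)" using assms by simp
  then have "(1 + e) * (1 - c) \<le> 2 * (1 - e * c)" by (simp add: algebra_simps)
  then have "q * ((1 + e) * (1 - c)) \<le> q * (2 * (1 - e * c))" using assms by (simp add: mult_left_mono)
  then show ?thesis using pos assms by (simp add: rho_minus_def divide_simps algebra_simps)
qed

text \<open>After clearing denominators, \<open>r\<^sub>- = q'\<close> is linear in \<open>e\<close>.\<close>

lemma rho_minus_hits_radius:
  fixes q qp c :: real
  assumes "0 < q" "q < qp" "0 \<le> c" "qp * (1 - c) \<le> 2 * q"
  obtains e where "0 \<le> e" "e \<le> 1" "e * c \<noteq> 1" "rho_minus q e c = qp"
proof
  define e where "e = (qp - q) / (q + qp * c)"
  have den: "q + qp * c > 0" using assms by (simp add: add_pos_nonneg)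
  show "0 \<le> e" using assms den by (simp add: e_def)
  show "e \<le> 1" using assms den by (simp add: e_def divide_simps algebra_simps)
  have eq: "q * (1 + e) = qp * (1 - e * c)" using den by (simp add: e_def field_simps)
  moreover have "q * (1 + e) \<noteq> 0" using assms \<open>0 \<le> e\<close> by simp
  ultimately show "e * c \<noteq> 1" by auto
  then show "rho_minus q e c = qp" using eq by (simp add: rho_minus_def divide_simps)
qed

lemma r_plus_eq_rho_plus:
  assumes "0 \<le> e" "0 \<le> cos \<omega>"
  shows "r_plus q e \<omega> = ereal (rho_plus q e (cos \<omega>))"
proof -
  have "1 + e * cos \<omega> > 0" using assms by (simp add: add_pos_nonneg)
  then show ?thesis by (simp add: r_plus_def rho_plus_def)
qed

lemma delta_nod_regular:
  assumes "0 \<le> e" "0 \<le> cos \<omega>" "e * cos \<omega> \<noteq> 1"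
  shows "delta_nod qp q e \<omega> =
    ereal (min \<bar>qp - rho_plus q e (cos \<omega>)\<bar> \<bar>qp - rho_minus q e (cos \<omega>)\<bar>)"
  using assms by (simp add: delta_nod_def r_plus_eq_rho_plus r_minus_def rho_minus_def)

lemma delta_nod_singular:
  assumes "0 \<le> e" "0 \<le> cos \<omega>" "e * cos \<omega> = 1"
  shows "delta_nod qp q e \<omega> = ereal \<bar>qp - rho_plus q e (cos \<omega>)\<bar>"
  using assms by (simp add: delta_nod_def r_plus_eq_rho_plus r_minus_def)

lemma delta_nod_le_abs_plus:
  assumes "0 \<le> e" "0 \<le> cos \<omega>"
  shows "delta_nod qp q e \<omega> \<le> ereal \<bar>qp - rho_plus q e (cos \<omega>)\<bar>"
  using assms delta_nod_regular[OF assms] delta_nod_singular[OF assms]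
  by (cases "e * cos \<omega> = 1") auto

lemma delta_nod_outside:
  assumes "0 \<le> e" "e \<le> 1" "0 \<le> cos \<omega>" "0 \<le> q" "qp \<le> rho_plus q e (cos \<omega>)"
  shows "delta_nod qp q e \<omega> = ereal (rho_plus q e (cos \<omega>) - qp)"
proof (cases "e * cos \<omega> = 1")
  case True
  then show ?thesis using assms delta_nod_singular by simp
next
  case False
  have "rho_plus q e (cos \<omega>) \<le> rho_minus q e (cos \<omega>)"
    using False assms by (intro rho_plus_le_rho_minus) auto
  then show ?thesis using assms False delta_nod_regular by simp
qed

lemma delta_nod_at_zero:
  assumes "0 \<le> cos \<omega>"
  shows "delta_nod qp q 0 \<omega> = ereal \<bar>qp - q\<bar>"
  using delta_nod_regular[of 0 \<omega> qp q] assms by (simp add: rho_plus_def rho_minus_def)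

lemma min_delta_nod_le_ereal:
  assumes "0 \<le> m" "q - qp \<le> m" "cos \<omega> < 1 \<Longrightarrow> qp - 2 * q / (1 - cos \<omega>) \<le> m"
  shows "min_delta_nod qp q \<omega> \<le> ereal m"
  using assms cos_le_one[of \<omega>] by (cases "cos \<omega> = 1") (auto simp: min_delta_nod_def)

lemma min_delta_nod_le_delta_nod:
  assumes "0 \<le> e" "e \<le> 1" "0 \<le> cos \<omega>" "0 \<le> q"
  shows "min_delta_nod qp q \<omega> \<le> delta_nod qp q e \<omega>"
proof (cases "e * cos \<omega> = 1")
  case True
  then have "1 \<le> cos \<omega>" using assms mult_right_mono[of e 1 "cos \<omega>"] by simp
  then have "cos \<omega> = 1" using cos_le_one[of \<omega>] by linarith
  then show ?thesis
    using assms True rho_plus_bounds(1)[of e "cos \<omega>" q]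
    by (auto simp: delta_nod_singular intro!: min_delta_nod_le_ereal)
next
  case False
  note bounds = rho_plus_bounds[of e "cos \<omega>" q] rho_minus_le[of e "cos \<omega>" q]
  have "rho_plus q e (cos \<omega>) \<le> rho_minus q e (cos \<omega>)"
    using False assms by (intro rho_plus_le_rho_minus) auto
  then show ?thesis
    using assms False bounds cos_le_one[of \<omega>]
    by (auto simp: delta_nod_regular intro!: min_delta_nod_le_ereal)
qed

lemma min_delta_nod_attained:
  assumes "0 < q" "0 \<le> cos \<omega>"
  obtains e where "0 \<le> e" "e \<le> 1" "delta_nod qp q e \<omega> = min_delta_nod qp q \<omega>"
proof -
  consider (inside) "qp \<le> q"
    | (outside) "q < qp" "cos \<omega> < 1" "2 * q / (1 - cos \<omega>) \<le> qp"
    | (crossing) "q < qp" "qp * (1 - cos \<omega>) \<le> 2 * q"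
  proof (cases "cos \<omega> = 1")
    case False
    then have "cos \<omega> < 1" using cos_le_one[of \<omega>] by linarith
    then have "2 * q / (1 - cos \<omega>) \<le> qp \<longleftrightarrow> 2 * q \<le> qp * (1 - cos \<omega>)"
      by (simp add: pos_divide_le_eq)
    with \<open>cos \<omega> < 1\<close> that show thesis by linarith
  qed (use assms that in force)
  then show thesis
  proof cases
    case inside
    have "qp - 2 * q / (1 - cos \<omega>) \<le> q - qp" if "cos \<omega> \<noteq> 1"
    proof -
      have "0 < 1 - cos \<omega>" using that cos_le_one[of \<omega>] by linarith
      moreover have "0 \<le> q * cos \<omega>" using assms by simp
      ultimately have "q \<le> 2 * q / (1 - cos \<omega>)"
        using assms by (simp add: le_divide_eq algebra_simps)
      then show ?thesis using inside by linarith
    qed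
    then have "min_delta_nod qp q \<omega> = ereal (q - qp)"
      using inside by (auto simp: min_delta_nod_def max_def)
    then show thesis using that[of 0] inside assms by (simp add: delta_nod_at_zero)
  next
    case outside
    have far: "rho_minus q 1 (cos \<omega>) = 2 * q / (1 - cos \<omega>)" by (simp add: rho_minus_def)
    have "rho_plus q 1 (cos \<omega>) \<le> rho_minus q 1 (cos \<omega>)"
      using outside assms by (intro rho_plus_le_rho_minus) auto
    then have "delta_nod qp q 1 \<omega> = ereal (qp - 2 * q / (1 - cos \<omega>))"
      using outside assms far by (simp add: delta_nod_regular)
    moreover have "min_delta_nod qp q \<omega> = ereal (qp - 2 * q / (1 - cos \<omega>))"
      using outside by (auto simp: min_delta_nod_def max_def)
    ultimately show thesis using that[of 1] by simp
  next
    case crossing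
    obtain e where e: "0 \<le> e" "e \<le> 1" "e * cos \<omega> \<noteq> 1" "rho_minus q e (cos \<omega>) = qp"
      using rho_minus_hits_radius[OF assms(1) crossing(1) assms(2) crossing(2)] .
    have "qp \<le> 2 * q / (1 - cos \<omega>)" if "cos \<omega> \<noteq> 1"
    proof -
      have "0 < 1 - cos \<omega>" using that cos_le_one[of \<omega>] by linarith
      then show ?thesis using crossing by (simp add: le_divide_eq)
    qed
    then have "min_delta_nod qp q \<omega> = 0"
      using crossing by (auto simp: min_delta_nod_def max_def)
    then show thesis using that[of e] e assms by (simp add: delta_nod_regular)
  qed
qed

lemma delta_nod_le_max_delta_nod:
  assumes "0 \<le> e" "e \<le> 1" "0 \<le> cos \<omega>" "0 \<le> q"
  shows "delta_nod qp q e \<omega> \<le> ereal (max_delta_nod qp q \<omega>)"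
proof -
  have "\<bar>qp - rho_plus q e (cos \<omega>)\<bar> \<le> max_delta_nod qp q \<omega>"
    using assms rho_plus_bounds[of e "cos \<omega>" q] by (auto simp: max_delta_nod_def)
  then show ?thesis using order_trans[OF delta_nod_le_abs_plus[OF assms(1,3)]] by simp
qed

lemma max_delta_nod_attained:
  assumes "0 < q" "0 \<le> cos \<omega>"
  obtains e where "0 \<le> e" "e \<le> 1" "delta_nod qp q e \<omega> = ereal (max_delta_nod qp q \<omega>)"
proof -
  have far: "q \<le> 2 * q / (1 + cos \<omega>)"
    using assms rho_plus_bounds[of 1 "cos \<omega>" q] by simp
  show thesis
  proof (cases "2 * q / (1 + cos \<omega>) - qp \<le> qp - q")
    case True
    then show thesis
      using that[of 0] far assms by (simp add: delta_nod_at_zero max_delta_nod_def)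
  next
    case False
    have "rho_plus q 1 (cos \<omega>) = 2 * q / (1 + cos \<omega>)" by (simp add: rho_plus_def)
    then have "delta_nod qp q 1 \<omega> = ereal (2 * q / (1 + cos \<omega>) - qp)"
      using False far assms by (simp add: delta_nod_outside)
    then show thesis using that[of 1] False by (simp add: max_delta_nod_def)
  qed
qed

theorem proposition8:
  fixes qp qmax q \<omega> :: real
  assumes "qp > 0" and "qmax > 0" and "0 < q" and "q \<le> qmax"
    and "0 \<le> \<omega>" and "\<omega> \<le> pi / 2"
  shows "(\<exists>e\<in>{0..1}. delta_nod qp q e \<omega> =
            max 0 (max (ereal qp - (if cos \<omega> = 1 then \<infinity> else ereal (2 * q / (1 - cos \<omega>))))
                       (ereal (q - qp))))
       \<and> (\<forall>e\<in>{0..1}. max 0 (max (ereal qp - (if cos \<omega> = 1 then \<infinity> else ereal (2 * q / (1 - cos \<omega>))))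
                       (ereal (q - qp))) \<le> delta_nod qp q e \<omega>)
       \<and> (\<exists>e\<in>{0..1}. delta_nod qp q e \<omega> = ereal (max (qp - q) (2 * q / (1 + cos \<omega>) - qp)))
       \<and> (\<forall>e\<in>{0..1}. delta_nod qp q e \<omega> \<le> ereal (max (qp - q) (2 * q / (1 + cos \<omega>) - qp)))"
proof -
  have c: "0 \<le> cos \<omega>" using assms by (intro cos_ge_zero) auto
  obtain e\<^sub>1 where "0 \<le> e\<^sub>1" "e\<^sub>1 \<le> 1" "delta_nod qp q e\<^sub>1 \<omega> = min_delta_nod qp q \<omega>"
    using min_delta_nod_attained[OF assms(3) c] .
  moreover obtain e\<^sub>2 where
    "0 \<le> e\<^sub>2" "e\<^sub>2 \<le> 1" "delta_nod qp q e\<^sub>2 \<omega> = ereal (max_delta_nod qp q \<omega>)"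
    using max_delta_nod_attained[OF assms(3) c] .
  moreover have "min_delta_nod qp q \<omega> \<le> delta_nod qp q e \<omega>" if "e \<in> {0..1}" for e
    using that c assms(3) by (intro min_delta_nod_le_delta_nod) auto
  moreover have "delta_nod qp q e \<omega> \<le> ereal (max_delta_nod qp q \<omega>)" if "e \<in> {0..1}" for e
    using that c assms(3) by (intro delta_nod_le_max_delta_nod) auto
  ultimately have "(\<exists>e\<in>{0..1}. delta_nod qp q e \<omega> = min_delta_nod qp q \<omega>)
    \<and> (\<forall>e\<in>{0..1}. min_delta_nod qp q \<omega> \<le> delta_nod qp q e \<omega>)
    \<and> (\<exists>e\<in>{0..1}. delta_nod qp q e \<omega> = ereal (max_delta_nod qp q \<omega>))
    \<and> (\<forall>e\<in>{0..1}. delta_nod qp q e \<omega> \<le> ereal (max_delta_nod qp q \<omega>))"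
    by auto
  then show ?thesis unfolding min_delta_nod_def max_delta_nod_def .
qed

end
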